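(* Let $A_1,A_2$ be bounded operators on a Hilbert space $\mathcal H$. The following are equivalent: (1) $(A_1,A_2)$ is almost normal; (2) $A_1^*+A_2z$ and $A_2^*+A_1z$ commute for every $z\in\mathbb T$; (3) $A_2^*+A_1z$ is normal for every $z\in\mathbb T$; (4) $A_1^*+A_2z$ is normal for every $z\in\mathbb T$.
   Context: A pair $(A_1,A_2)$ is almost normal if $A_1A_2=A_2A_1$ and $A_1^*A_1-A_1A_1^*=A_2^*A_2-A_2A_2^*$. *)

theory Defs
  imports "HOL-Analysis.Analysis"
begin

definition hnorm :: "('a \<Rightarrow> 'a \<Rightarrow> complex) \<Rightarrow> 'a \<Rightarrow> real" where
  "hnorm ip x = sqrt (Re (ip x x))"

definition hilbert_space :: "(complex \<Rightarrow> 'a::ab_group_add \<Rightarrow> 'a) \<Rightarrow> ('a \<Rightarrow> 'a \<Rightarrow> complex) \<Rightarrow> bool" where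
  "hilbert_space sc ip \<longleftrightarrow>
     vector_space sc \<and>
     (\<forall>x y z. ip (x + y) z = ip x z + ip y z) \<and>
     (\<forall>c x y. ip (sc c x) y = c * ip x y) \<and>
     (\<forall>x y. ip y x = cnj (ip x y)) \<and>
     (\<forall>x. 0 \<le> Re (ip x x)) \<and>
     (\<forall>x. ip x x = 0 \<longrightarrow> x = 0) \<and>
     (\<forall>X::nat \<Rightarrow> 'a. (\<forall>e>0. \<exists>N. \<forall>m\<ge>N. \<forall>n\<ge>N. hnorm ip (X m - X n) < e)
        \<longrightarrow> (\<exists>L. (\<lambda>n. hnorm ip (X n - L)) \<longlonglongrightarrow> 0))"

definition bounded_op :: "(complex \<Rightarrow> 'a::ab_group_add \<Rightarrow> 'a) \<Rightarrow> ('a \<Rightarrow> 'a \<Rightarrow> complex) \<Rightarrow> ('a \<Rightarrow> 'a) \<Rightarrow> bool" where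
  "bounded_op sc ip A \<longleftrightarrow>
     (\<forall>x y. A (x + y) = A x + A y) \<and>
     (\<forall>c x. A (sc c x) = sc c (A x)) \<and>
     (\<exists>K. \<forall>x. hnorm ip (A x) \<le> K * hnorm ip x)"

definition adj :: "('a \<Rightarrow> 'a \<Rightarrow> complex) \<Rightarrow> ('a \<Rightarrow> 'a) \<Rightarrow> ('a \<Rightarrow> 'a)" where
  "adj ip A = (THE B. \<forall>x y. ip (A x) y = ip x (B y))"

definition normal_op :: "('a \<Rightarrow> 'a \<Rightarrow> complex) \<Rightarrow> ('a \<Rightarrow> 'a) \<Rightarrow> bool" where
  "normal_op ip T \<longleftrightarrow> T \<circ> adj ip T = adj ip T \<circ> T"

definition almost_normal :: "('a \<Rightarrow> 'a \<Rightarrow> complex) \<Rightarrow> ('a::ab_group_add \<Rightarrow> 'a) \<Rightarrow> ('a \<Rightarrow> 'a) \<Rightarrow> bool" where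
  "almost_normal ip A1 A2 \<longleftrightarrow>
     A1 \<circ> A2 = A2 \<circ> A1 \<and>
     (\<lambda>x. adj ip A1 (A1 x) - A1 (adj ip A1 x)) = (\<lambda>x. adj ip A2 (A2 x) - A2 (adj ip A2 x))"

end

theory Submission
  imports Defs
begin

text \<open>Expanding the products, each of the three conditions says that an operator-valued
trigonometric polynomial of degree at most two in \<open>z\<close> vanishes on the unit circle.
Evaluating at \<open>z = 1, -1, \<i>\<close> shows that this happens exactly when all coefficients vanish,
and in every case the coefficients are the three identities \<open>A\<^sub>1 A\<^sub>2 = A\<^sub>2 A\<^sub>1\<close>,
\<open>A\<^sub>1\<^sup>* A\<^sub>2\<^sup>* = A\<^sub>2\<^sup>* A\<^sub>1\<^sup>*\<close> and \<open>A\<^sub>1\<^sup>* A\<^sub>1 + A\<^sub>2 A\<^sub>2\<^sup>* = A\<^sub>1 A\<^sub>1\<^sup>* + A\<^sub>2\<^sup>* A\<^sub>2\<close>,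
which together are equivalent to almost normality (the second follows from the first by taking
adjoints). The only analytic input is that bounded operators have adjoints; this is the Riesz
representation theorem, obtained from the point of the closed kernel of a bounded functional
nearest to a given vector, whose existence follows from the parallelogram law and completeness.\<close>

lemma double_eq_0_iff:
  fixes sc :: "complex \<Rightarrow> 'a::ab_group_add \<Rightarrow> 'a" and x :: 'a
  assumes "vector_space sc"
  shows "x + x = 0 \<longleftrightarrow> x = 0"
proof -
  interpret vector_space sc by fact
  show ?thesis
    using scale_left_distrib[of 1 1 x] scale_eq_0_iff[of 2 x] by simp
qed

lemma unit_circle_quadratic_eq_iff:
  fixes sc :: "complex \<Rightarrow> 'a::ab_group_add \<Rightarrow> 'a"
  assumes "vector_space sc"
  shows "(\<forall>z. cmod z = 1 \<longrightarrow> a + sc z b + sc (z * z) c = a' + sc z b' + sc (z * z) c')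
    \<longleftrightarrow> a = a' \<and> b = b' \<and> c = c'"
proof -
  interpret vector_space sc by fact
  have "p = 0 \<and> q = 0 \<and> r = 0" if h: "\<And>z. cmod z = 1 \<Longrightarrow> p + sc z q + sc (z * z) r = 0" for p q r
  proof -
    have e1: "p + q + r = 0" and e2: "p - q + r = 0" and e3: "p + sc \<i> q - r = 0"
      using h[of 1] h[of "-1"] h[of \<i>] by (simp_all add: scale_minus_left)
    have "q + q = (p + q + r) - (p - q + r)"
      by (simp add: algebra_simps)
    then have "q = 0"
      using e1 e2 double_eq_0_iff[OF assms] by simp
    have "p + p = (p + q + r) + (p + sc \<i> q - r)"
      using \<open>q = 0\<close> by (simp add: algebra_simps)
    then have "p = 0"
      using e1 e3 double_eq_0_iff[OF assms] by simp
    then show ?thesis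
      using e1 \<open>q = 0\<close> by simp
  qed
  from this[of "a - a'" "b - b'" "c - c'"] show ?thesis
    by (auto simp: scale_right_diff_distrib algebra_simps)
qed

lemma unit_circle_trigonometric_eq_iff:
  fixes sc :: "complex \<Rightarrow> 'a::ab_group_add \<Rightarrow> 'a"
  assumes "vector_space sc"
  shows "(\<forall>z. cmod z = 1 \<longrightarrow> a + sc z b + sc (cnj z) c = a' + sc z b' + sc (cnj z) c')
    \<longleftrightarrow> a = a' \<and> b = b' \<and> c = c'"
proof -
  interpret vector_space sc by fact
  have "p = 0 \<and> q = 0 \<and> r = 0" if h: "\<And>z. cmod z = 1 \<Longrightarrow> p + sc z q + sc (cnj z) r = 0" for p q r
  proof -
    have e1: "p + q + r = 0" and e2: "p - q - r = 0" and e3: "p + sc \<i> q - sc \<i> r = 0"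
      using h[of 1] h[of "-1"] h[of \<i>] by (simp_all add: scale_minus_left)
    have "p + p = (p + q + r) + (p - q - r)"
      by (simp add: algebra_simps)
    then have "p = 0"
      using e1 e2 double_eq_0_iff[OF assms] by simp
    then have "sc \<i> (q - r) = 0"
      using e3 by (simp add: scale_right_diff_distrib)
    then have "q = r"
      by simp
    then show ?thesis
      using e1 \<open>p = 0\<close> double_eq_0_iff[OF assms] by simp
  qed
  from this[of "a - a'" "b - b'" "c - c'"] show ?thesis
    by (auto simp: scale_right_diff_distrib algebra_simps)
qed

locale complex_hilbert_space =
  fixes sc :: "complex \<Rightarrow> 'a::ab_group_add \<Rightarrow> 'a" and ip :: "'a \<Rightarrow> 'a \<Rightarrow> complex"
  assumes hilbert: "hilbert_space sc ip"
begin

sublocale vs: vector_space sc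
  using hilbert unfolding hilbert_space_def by (elim conjE)

lemma ip_add_left: "ip (x + y) z = ip x z + ip y z"
  using hilbert unfolding hilbert_space_def by metis

lemma ip_scale_left: "ip (sc c x) y = c * ip x y"
  using hilbert unfolding hilbert_space_def by metis

lemma ip_conj_sym: "ip y x = cnj (ip x y)"
  using hilbert unfolding hilbert_space_def by metis

lemma Re_ip_self_nonneg: "0 \<le> Re (ip x x)"
  using hilbert unfolding hilbert_space_def by metis

lemma ip_self_eq_0: "ip x x = 0 \<Longrightarrow> x = 0"
  using hilbert unfolding hilbert_space_def by metis

lemma hnorm_Cauchy_convergent:
  assumes "\<forall>e>0. \<exists>N. \<forall>m\<ge>N. \<forall>n\<ge>N. hnorm ip (X m - X n) < e"
  shows "\<exists>L. (\<lambda>n. hnorm ip (X n - L)) \<longlonglongrightarrow> 0"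
  using hilbert assms unfolding hilbert_space_def by metis

lemma ip_add_right: "ip x (y + z) = ip x y + ip x z"
  by (metis ip_conj_sym ip_add_left complex_cnj_add)

lemma ip_scale_right: "ip x (sc c y) = cnj c * ip x y"
  by (metis ip_conj_sym ip_scale_left complex_cnj_mult)

lemma ip_minus_left: "ip (- x) y = - ip x y"
  using ip_add_left[of x "- x" y] ip_add_left[of 0 0 y] by (simp add: eq_neg_iff_add_eq_0)

lemma ip_minus_right: "ip y (- x) = - ip y x"
  by (metis ip_conj_sym ip_minus_left complex_cnj_minus)

lemma ip_diff_left: "ip (x - y) z = ip x z - ip y z"
  using ip_add_left[of x "- y" z] by (simp add: ip_minus_left)

lemma ip_diff_right: "ip z (x - y) = ip z x - ip z y"
  using ip_add_right[of z x "- y"] by (simp add: ip_minus_right)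

lemma ip_zero_right [simp]: "ip y 0 = 0"
  using ip_diff_right[of y 0 0] by simp

lemma ip_right_eqI: "(\<And>x. ip x a = ip x b) \<Longrightarrow> a = b"
  using ip_self_eq_0[of "a - b"] ip_diff_right[of "a - b" a b] by simp

definition sqnorm :: "'a \<Rightarrow> real" where
  "sqnorm x = Re (ip x x)"

lemma ip_self: "ip x x = of_real (sqnorm x)"
  using ip_conj_sym[of x x] by (simp add: sqnorm_def complex_eq_iff)

lemma sqnorm_nonneg: "0 \<le> sqnorm x"
  by (simp add: sqnorm_def Re_ip_self_nonneg)

lemma sqnorm_pos: "x \<noteq> 0 \<Longrightarrow> 0 < sqnorm x"
  using ip_self_eq_0[of x] ip_self[of x] sqnorm_nonneg[of x] by force

lemma hnorm_eq_sqrt: "hnorm ip x = sqrt (sqnorm x)"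
  by (simp add: hnorm_def sqnorm_def)

lemma hnorm_nonneg: "0 \<le> hnorm ip x"
  by (simp add: hnorm_eq_sqrt sqnorm_nonneg)

lemma hnorm_power2: "hnorm ip x ^ 2 = sqnorm x"
  by (simp add: hnorm_eq_sqrt sqnorm_nonneg)

lemma sqnorm_add: "sqnorm (x + y) = sqnorm x + sqnorm y + 2 * Re (ip x y)"
  using ip_conj_sym[of y x] by (simp add: sqnorm_def ip_add_left ip_add_right)

lemma sqnorm_minus: "sqnorm (- x) = sqnorm x"
  by (simp add: sqnorm_def ip_minus_left ip_minus_right)

lemma sqnorm_commute: "sqnorm (x - y) = sqnorm (y - x)"
  using sqnorm_minus[of "x - y"] by simp

lemma sqnorm_scale: "sqnorm (sc c x) = (cmod c)\<^sup>2 * sqnorm x"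
proof -
  have "cnj c * c = of_real ((cmod c)\<^sup>2)"
    by (metis complex_norm_square mult.commute)
  then show ?thesis
    unfolding sqnorm_def by (simp add: ip_scale_left ip_scale_right mult.assoc[symmetric])
qed

lemma parallelogram: "sqnorm (a + b) + sqnorm (a - b) = 2 * sqnorm a + 2 * sqnorm b"
  using sqnorm_add[of a b] sqnorm_add[of a "- b"] sqnorm_minus[of b] by (simp add: ip_minus_right)

lemma sqnorm_diff_projection:
  assumes "n \<noteq> 0"
  shows "sqnorm (u - sc (ip u n / ip n n) n) = sqnorm u - (cmod (ip u n))\<^sup>2 / sqnorm n"
proof -
  define a s t where "a = ip u n" and "s = sqnorm n" and "t = ip u n / ip n n"
  have "s \<noteq> 0"
    using sqnorm_pos[OF assms] by (simp add: s_def)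
  have t: "t = a / of_real s"
    by (simp add: t_def a_def s_def ip_self)
  have "ip (u - sc t n) (u - sc t n) = ip u u - cnj t * a - t * cnj a + t * cnj t * of_real s"
    by (simp add: a_def s_def ip_diff_left ip_diff_right ip_scale_left ip_scale_right
        ip_conj_sym[of n u] ip_self[of n] algebra_simps)
  also have "\<dots> = of_real (sqnorm u - (cmod a)\<^sup>2 / s)"
    using \<open>s \<noteq> 0\<close> complex_norm_square[of a] unfolding t by (simp add: ip_self field_simps)
  finally have "sqnorm (u - sc t n) = sqnorm u - (cmod a)\<^sup>2 / s"
    unfolding sqnorm_def[of "u - sc t n"] by simp
  then show ?thesis
    by (simp add: t_def a_def s_def)
qed

lemma Cauchy_Schwarz: "cmod (ip x y) \<le> hnorm ip x * hnorm ip y"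
proof (cases "y = 0")
  case True
  then show ?thesis by (simp add: hnorm_nonneg)
next
  case False
  have "0 \<le> sqnorm x - (cmod (ip x y))\<^sup>2 / sqnorm y"
    using sqnorm_nonneg sqnorm_diff_projection[OF False] by metis
  then have "(cmod (ip x y))\<^sup>2 \<le> (hnorm ip x * hnorm ip y)\<^sup>2"
    using sqnorm_pos[OF False] by (simp add: field_simps power_mult_distrib hnorm_power2)
  then show ?thesis
    using hnorm_nonneg by (meson mult_nonneg_nonneg power2_le_imp_le)
qed

lemma hnorm_triangle: "hnorm ip (x + y) \<le> hnorm ip x + hnorm ip y"
proof -
  have "Re (ip x y) \<le> hnorm ip x * hnorm ip y"
    using Cauchy_Schwarz[of x y] complex_Re_le_cmod order_trans by blast
  then have "(hnorm ip (x + y))\<^sup>2 \<le> (hnorm ip x + hnorm ip y)\<^sup>2"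
    by (simp add: hnorm_power2 sqnorm_add power2_sum)
  then show ?thesis
    using hnorm_nonneg by (meson add_nonneg_nonneg power2_le_imp_le)
qed

lemma sqnorm_diff_le_near_minimal:
  assumes "d \<le> sqnorm (x0 - sc (1/2) (a + b))"
    and "sqnorm (x0 - a) \<le> d + e1" and "sqnorm (x0 - b) \<le> d + e2"
  shows "sqnorm (a - b) \<le> 2 * e1 + 2 * e2"
proof -
  have "(x0 - a) + (x0 - b) = sc 2 (x0 - sc (1/2) (a + b))"
    by (simp add: vs.scale_right_diff_distrib vs.scale_left_distrib[of 1 1, simplified])
  then have "sqnorm ((x0 - a) + (x0 - b)) = 4 * sqnorm (x0 - sc (1/2) (a + b))"
    by (simp add: sqnorm_scale)
  moreover have "sqnorm ((x0 - a) - (x0 - b)) = sqnorm (a - b)"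
    using sqnorm_commute[of b a] by simp
  ultimately show ?thesis
    using parallelogram[of "x0 - a" "x0 - b"] assms by linarith
qed

lemma convergent_if_sqnorm_diff_le:
  assumes bound: "\<And>k m. sqnorm (X k - X m) \<le> e k + e m" and "e \<longlonglongrightarrow> 0"
  shows "\<exists>L. (\<lambda>n. hnorm ip (X n - L)) \<longlonglongrightarrow> 0"
proof (rule hnorm_Cauchy_convergent, intro allI impI)
  fix r :: real
  assume "r > 0"
  then obtain N where N: "\<And>n. n \<ge> N \<Longrightarrow> \<bar>e n\<bar> < r\<^sup>2 / 2"
    using LIMSEQ_D[OF \<open>e \<longlonglongrightarrow> 0\<close>, of "r\<^sup>2 / 2"] by auto
  have "hnorm ip (X m - X n) < r" if "m \<ge> N" "n \<ge> N" for m n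
  proof -
    have "(hnorm ip (X m - X n))\<^sup>2 < r\<^sup>2"
      using bound[of m n] N[OF that(1)] N[OF that(2)] by (simp add: hnorm_power2)
    then show ?thesis
      using \<open>r > 0\<close> by (simp add: power_less_imp_less_base)
  qed
  then show "\<exists>N. \<forall>m\<ge>N. \<forall>n\<ge>N. hnorm ip (X m - X n) < r"
    by blast
qed

lemma sqnorm_le_of_limit:
  assumes lim: "(\<lambda>k. hnorm ip (X k - L)) \<longlonglongrightarrow> 0" and "e \<longlonglongrightarrow> 0"
    and near: "\<And>k. sqnorm (x0 - X k) \<le> d + e k"
  shows "sqnorm (x0 - L) \<le> d"
proof -
  have "0 \<le> d + e k" for k
    using near[of k] sqnorm_nonneg order_trans by blast
  moreover have "(\<lambda>k. d + e k) \<longlonglongrightarrow> d"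
    using tendsto_add[OF tendsto_const \<open>e \<longlonglongrightarrow> 0\<close>] by simp
  ultimately have "0 \<le> d"
    by (intro LIMSEQ_le_const) auto
  have "hnorm ip (x0 - L) \<le> sqrt (d + e k) + hnorm ip (X k - L)" for k
  proof -
    have "hnorm ip (x0 - L) \<le> hnorm ip (x0 - X k) + hnorm ip (X k - L)"
      using hnorm_triangle[of "x0 - X k" "X k - L"] by simp
    moreover have "hnorm ip (x0 - X k) \<le> sqrt (d + e k)"
      using near[of k] by (simp add: hnorm_eq_sqrt)
    ultimately show ?thesis
      by linarith
  qed
  moreover have "(\<lambda>k. sqrt (d + e k) + hnorm ip (X k - L)) \<longlonglongrightarrow> sqrt d"
    using tendsto_add[OF tendsto_real_sqrt[OF \<open>(\<lambda>k. d + e k) \<longlonglongrightarrow> d\<close>] lim] by simp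
  ultimately have "hnorm ip (x0 - L) \<le> sqrt d"
    by (intro LIMSEQ_le_const) auto
  then show ?thesis
    using \<open>0 \<le> d\<close> by (simp add: hnorm_eq_sqrt)
qed

lemma nearest_point_exists:
  assumes "N \<noteq> {}"
    and midpoint: "\<And>a b. a \<in> N \<Longrightarrow> b \<in> N \<Longrightarrow> sc (1/2) (a + b) \<in> N"
    and closed: "\<And>X L. (\<And>k. X k \<in> N) \<Longrightarrow> (\<lambda>k. hnorm ip (X k - L)) \<longlonglongrightarrow> 0 \<Longrightarrow> L \<in> N"
  shows "\<exists>L\<in>N. \<forall>n\<in>N. sqnorm (x0 - L) \<le> sqnorm (x0 - n)"
proof -
  define d where "d = (INF n\<in>N. sqnorm (x0 - n))"
  define e :: "nat \<Rightarrow> real" where "e k = inverse (real (Suc k))" for k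
  have bdd: "bdd_below ((\<lambda>n. sqnorm (x0 - n)) ` N)"
    using sqnorm_nonneg by (intro bdd_belowI2)
  have d_le: "d \<le> sqnorm (x0 - n)" if "n \<in> N" for n
    unfolding d_def using bdd that by (rule cINF_lower)
  have "\<exists>n\<in>N. sqnorm (x0 - n) < d + e k" for k
    using cINF_less_iff[OF \<open>N \<noteq> {}\<close> bdd, of "d + e k"] by (auto simp: d_def e_def)
  then obtain X where X: "\<And>k. X k \<in> N" and near: "\<And>k. sqnorm (x0 - X k) \<le> d + e k"
    by (metis less_imp_le)
  have "sqnorm (X k - X m) \<le> 2 * e k + 2 * e m" for k m
    using sqnorm_diff_le_near_minimal d_le midpoint X near by blast
  moreover have e: "e \<longlonglongrightarrow> 0"
    unfolding e_def by (rule LIMSEQ_inverse_real_of_nat)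
  ultimately obtain L where lim: "(\<lambda>k. hnorm ip (X k - L)) \<longlonglongrightarrow> 0"
    using convergent_if_sqnorm_diff_le[of X "\<lambda>k. 2 * e k"] tendsto_mult_right_zero[OF e] by auto
  have "L \<in> N"
    using closed X lim by blast
  moreover have "sqnorm (x0 - L) \<le> d"
    using sqnorm_le_of_limit[OF lim e near] .
  ultimately show ?thesis
    using d_le order_trans by blast
qed

lemma nearest_point_orthogonal:
  assumes "\<And>t. L + sc t n \<in> N" and nearest: "\<forall>m\<in>N. sqnorm (x0 - L) \<le> sqnorm (x0 - m)"
  shows "ip (x0 - L) n = 0"
proof (cases "n = 0")
  case True
  then show ?thesis by simp
next
  case False
  define t where "t = ip (x0 - L) n / ip n n"
  have "x0 - (L + sc t n) = (x0 - L) - sc t n"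
    by simp
  then have "sqnorm (x0 - L) \<le> sqnorm (x0 - L) - (cmod (ip (x0 - L) n))\<^sup>2 / sqnorm n"
    using nearest assms(1)[of t] sqnorm_diff_projection[OF False, of "x0 - L"] unfolding t_def
    by metis
  then show ?thesis
    using sqnorm_pos[OF False] by (simp add: divide_le_0_iff)
qed

lemma bounded_functional_kernel_closed:
  assumes "\<And>x y. f (x + y) = f x + f y" and bound: "\<And>x. cmod (f x) \<le> C * hnorm ip x"
    and "\<And>k. f (X k) = 0" and lim: "(\<lambda>k. hnorm ip (X k - L)) \<longlonglongrightarrow> 0"
  shows "f L = 0"
proof -
  have "f (L - X k) = f L" for k
    using assms(1)[of "L - X k" "X k"] assms(3)[of k] by simp
  then have "cmod (f L) \<le> C * hnorm ip (X k - L)" for k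
    using bound[of "L - X k"] by (simp add: hnorm_eq_sqrt sqnorm_commute[of L])
  moreover have "(\<lambda>k. C * hnorm ip (X k - L)) \<longlonglongrightarrow> 0"
    using tendsto_mult_right_zero[OF lim] by simp
  ultimately have "cmod (f L) \<le> 0"
    by (intro LIMSEQ_le_const) auto
  then show ?thesis by simp
qed

theorem Riesz_representation:
  assumes add: "\<And>x y. f (x + y) = f x + f y" and scale: "\<And>c x. f (sc c x) = c * f x"
    and bound: "\<And>x. cmod (f x) \<le> C * hnorm ip x"
  shows "\<exists>w. \<forall>x. f x = ip x w"
proof (cases "\<forall>x. f x = 0")
  case True
  then show ?thesis
    by (intro exI[of _ 0]) simp
next
  case False
  then obtain x0 where "f x0 \<noteq> 0" by blast
  define N where "N = {n. f n = 0}"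
  have f0: "f 0 = 0"
    using scale[of 0 0] by simp
  have "\<exists>L\<in>N. \<forall>n\<in>N. sqnorm (x0 - L) \<le> sqnorm (x0 - n)"
    using bounded_functional_kernel_closed[OF add bound] f0
    by (intro nearest_point_exists) (auto simp: N_def add scale)
  then obtain L where "f L = 0" and nearest: "\<forall>n\<in>N. sqnorm (x0 - L) \<le> sqnorm (x0 - n)"
    by (auto simp: N_def)
  define u where "u = x0 - L"
  have orth: "ip u n = 0" if "f n = 0" for n
    unfolding u_def using \<open>f L = 0\<close> that nearest
    by (intro nearest_point_orthogonal[where N = N]) (auto simp: N_def add scale)
  have fu: "f u \<noteq> 0"
    using add[of u L] \<open>f x0 \<noteq> 0\<close> \<open>f L = 0\<close> by (simp add: u_def)
  then have "ip u u \<noteq> 0"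
    using ip_self_eq_0 f0 by blast
  have "f x = ip x (sc (cnj (f u / ip u u)) u)" for x
  proof -
    define c where "c = f x / f u"
    have "f (x + sc (- c) u) = 0"
      using fu by (simp only: add scale) (simp add: c_def)
    then have "ip (x + sc (- c) u) u = 0"
      using orth ip_conj_sym by (metis complex_cnj_zero)
    then have "ip x u = c * ip u u"
      by (simp only: ip_add_left ip_scale_left) (simp add: algebra_simps)
    then show ?thesis
      using fu \<open>ip u u \<noteq> 0\<close> by (simp add: ip_scale_right c_def field_simps)
  qed
  then show ?thesis by blast
qed

definition is_adjoint :: "('a \<Rightarrow> 'a) \<Rightarrow> ('a \<Rightarrow> 'a) \<Rightarrow> bool" where
  "is_adjoint A B \<longleftrightarrow> (\<forall>x y. ip (A x) y = ip x (B y))"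

lemma adj_eqI: "is_adjoint A B \<Longrightarrow> adj ip A = B"
  unfolding adj_def is_adjoint_def
  by (rule the_equality) (assumption, rule ext, rule ip_right_eqI, metis)

lemma bounded_op_linear: "bounded_op sc ip A \<Longrightarrow> Vector_Spaces.linear sc sc A"
  by (simp add: bounded_op_def Vector_Spaces.linear_iff vs.vector_space_axioms)

lemma is_adjoint_adj:
  assumes "bounded_op sc ip A"
  shows "is_adjoint A (adj ip A)"
proof -
  obtain K where K: "\<And>x. hnorm ip (A x) \<le> K * hnorm ip x"
    using assms unfolding bounded_op_def by blast
  have "\<exists>w. \<forall>x. ip (A x) y = ip x w" for y
  proof (rule Riesz_representation)
    show "ip (A (x + x')) y = ip (A x) y + ip (A x') y" for x x'
      using bounded_op_linear[OF assms] by (simp add: Vector_Spaces.linear_iff ip_add_left)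
    show "ip (A (sc c x)) y = c * ip (A x) y" for c x
      using bounded_op_linear[OF assms] by (simp add: Vector_Spaces.linear_iff ip_scale_left)
    show "cmod (ip (A x) y) \<le> K * hnorm ip y * hnorm ip x" for x
      using order_trans[OF Cauchy_Schwarz mult_right_mono[OF K hnorm_nonneg]]
      by (simp add: mult_ac)
  qed
  then obtain B where "\<forall>y x. ip (A x) y = ip x (B y)"
    by metis
  then have "is_adjoint A B"
    by (simp add: is_adjoint_def)
  then show ?thesis
    using adj_eqI by simp
qed

lemma is_adjoint_linear:
  assumes "is_adjoint A B"
  shows "Vector_Spaces.linear sc sc B"
proof -
  have adjoint: "ip (A x) y = ip x (B y)" for x y
    using assms by (simp add: is_adjoint_def)
  have "B (y + y') = B y + B y'" "B (sc c y) = sc c (B y)" for c y y'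
    by (rule ip_right_eqI, simp only: ip_add_right ip_scale_right adjoint[symmetric])+
  then show ?thesis
    by (simp add: Vector_Spaces.linear_iff vs.vector_space_axioms)
qed

lemma is_adjoint_sym: "is_adjoint A B \<Longrightarrow> is_adjoint B A"
  unfolding is_adjoint_def by (metis ip_conj_sym)

lemma is_adjoint_comp: "is_adjoint A B \<Longrightarrow> is_adjoint C D \<Longrightarrow> is_adjoint (A \<circ> C) (D \<circ> B)"
  unfolding is_adjoint_def by simp

lemma is_adjoint_pencil:
  "is_adjoint A B \<Longrightarrow> is_adjoint C D \<Longrightarrow>
    is_adjoint (\<lambda>x. A x + sc z (C x)) (\<lambda>x. B x + sc (cnj z) (D x))"
  unfolding is_adjoint_def by (simp add: ip_add_left ip_add_right ip_scale_left ip_scale_right)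

lemma linear_pencil_comp:
  assumes "Vector_Spaces.linear sc sc P" and "Vector_Spaces.linear sc sc Q"
  shows "(\<lambda>x. P x + sc z (Q x)) \<circ> (\<lambda>x. R x + sc w (S x))
    = (\<lambda>x. P (R x) + sc w (P (S x)) + sc z (Q (R x)) + sc (z * w) (Q (S x)))"
proof -
  have "P (u + sc c v) = P u + sc c (P v)" and "Q (u + sc c v) = Q u + sc c (Q v)" for u v c
    using assms by (simp_all add: Vector_Spaces.linear_iff)
  then show ?thesis
    by (simp add: fun_eq_iff vs.scale_right_distrib add.assoc)
qed

lemma adj_comm_if_comm:
  assumes "bounded_op sc ip A" and "bounded_op sc ip C" and "A \<circ> C = C \<circ> A"
  shows "adj ip A \<circ> adj ip C = adj ip C \<circ> adj ip A"
proof -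
  have "adj ip (A \<circ> C) = adj ip C \<circ> adj ip A"
    using is_adjoint_comp[OF is_adjoint_adj[OF assms(1)] is_adjoint_adj[OF assms(2)]] by (rule adj_eqI)
  moreover have "adj ip (C \<circ> A) = adj ip A \<circ> adj ip C"
    using is_adjoint_comp[OF is_adjoint_adj[OF assms(2)] is_adjoint_adj[OF assms(1)]] by (rule adj_eqI)
  ultimately show ?thesis
    using assms(3) by simp
qed

lemma almost_normal_iff:
  assumes "bounded_op sc ip A1" and "bounded_op sc ip A2"
  shows "almost_normal ip A1 A2 \<longleftrightarrow>
    A1 \<circ> A2 = A2 \<circ> A1 \<and> adj ip A1 \<circ> adj ip A2 = adj ip A2 \<circ> adj ip A1 \<and>
    (\<forall>x. adj ip A1 (A1 x) + A2 (adj ip A2 x) = A1 (adj ip A1 x) + adj ip A2 (A2 x))"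
proof -
  have "a - b = c - d \<longleftrightarrow> a + d = b + c" for a b c d :: 'a
    by (simp add: algebra_simps)
  then show ?thesis
    using adj_comm_if_comm[OF assms] by (auto simp: almost_normal_def fun_eq_iff)
qed

lemma commuting_pencils_iff:
  assumes "bounded_op sc ip A1" and "bounded_op sc ip A2"
  shows "(\<forall>z. cmod z = 1 \<longrightarrow>
      (\<lambda>x. adj ip A1 x + sc z (A2 x)) \<circ> (\<lambda>x. adj ip A2 x + sc z (A1 x))
    = (\<lambda>x. adj ip A2 x + sc z (A1 x)) \<circ> (\<lambda>x. adj ip A1 x + sc z (A2 x))) \<longleftrightarrow>
    adj ip A1 \<circ> adj ip A2 = adj ip A2 \<circ> adj ip A1 \<and>
    (\<forall>x. adj ip A1 (A1 x) + A2 (adj ip A2 x) = adj ip A2 (A2 x) + A1 (adj ip A1 x)) \<and>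
    A2 \<circ> A1 = A1 \<circ> A2"
  (is "?pencils \<longleftrightarrow> _")
proof -
  define B1 B2 where "B1 = adj ip A1" and "B2 = adj ip A2"
  have lin: "Vector_Spaces.linear sc sc A1" "Vector_Spaces.linear sc sc A2"
      "Vector_Spaces.linear sc sc B1" "Vector_Spaces.linear sc sc B2"
    using assms by (simp_all add: B1_def B2_def bounded_op_linear is_adjoint_linear[OF is_adjoint_adj])
  have "?pencils \<longleftrightarrow> (\<forall>x. \<forall>z. cmod z = 1 \<longrightarrow>
      B1 (B2 x) + sc z (B1 (A1 x) + A2 (B2 x)) + sc (z * z) (A2 (A1 x))
    = B2 (B1 x) + sc z (B2 (A2 x) + A1 (B1 x)) + sc (z * z) (A1 (A2 x)))"
    unfolding B1_def[symmetric] B2_def[symmetric] linear_pencil_comp[OF lin(3,2)]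
      linear_pencil_comp[OF lin(4,1)]
    by (auto simp: fun_eq_iff vs.scale_right_distrib add.assoc)
  also have "\<dots> \<longleftrightarrow> (\<forall>x. B1 (B2 x) = B2 (B1 x) \<and>
      B1 (A1 x) + A2 (B2 x) = B2 (A2 x) + A1 (B1 x) \<and> A2 (A1 x) = A1 (A2 x))"
    by (simp add: unit_circle_quadratic_eq_iff[OF vs.vector_space_axioms])
  finally show ?thesis
    by (auto simp: B1_def B2_def fun_eq_iff)
qed

lemma normal_pencil_iff:
  assumes "bounded_op sc ip A" and "bounded_op sc ip C"
  shows "(\<forall>z. cmod z = 1 \<longrightarrow> normal_op ip (\<lambda>x. adj ip A x + sc z (C x))) \<longleftrightarrow>
    (\<forall>x. adj ip A (A x) + C (adj ip C x) = A (adj ip A x) + adj ip C (C x)) \<and>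
    C \<circ> A = A \<circ> C \<and> adj ip A \<circ> adj ip C = adj ip C \<circ> adj ip A"
  (is "?normal \<longleftrightarrow> _")
proof -
  define B D where "B = adj ip A" and "D = adj ip C"
  have lin: "Vector_Spaces.linear sc sc A" "Vector_Spaces.linear sc sc C"
      "Vector_Spaces.linear sc sc B" "Vector_Spaces.linear sc sc D"
    using assms by (simp_all add: B_def D_def bounded_op_linear is_adjoint_linear[OF is_adjoint_adj])
  have adj_pencil: "adj ip (\<lambda>x. B x + sc z (C x)) = (\<lambda>x. A x + sc (cnj z) (D x))" for z
    using is_adjoint_sym[OF is_adjoint_adj[OF assms(1)]] is_adjoint_adj[OF assms(2)]
    unfolding B_def D_def by (intro adj_eqI is_adjoint_pencil)
  have "z * cnj z = 1" and "cnj z * z = 1" if "cmod z = 1" for z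
    using complex_norm_square[of z] that by (simp_all add: mult.commute)
  then have "?normal \<longleftrightarrow> (\<forall>x. \<forall>z. cmod z = 1 \<longrightarrow>
      (B (A x) + C (D x)) + sc z (C (A x)) + sc (cnj z) (B (D x))
    = (A (B x) + D (C x)) + sc z (A (C x)) + sc (cnj z) (D (B x)))"
    unfolding B_def[symmetric] D_def[symmetric] normal_op_def adj_pencil
      linear_pencil_comp[OF lin(3,2)] linear_pencil_comp[OF lin(1,4)]
    by (auto simp: fun_eq_iff add_ac)
  also have "\<dots> \<longleftrightarrow> (\<forall>x. B (A x) + C (D x) = A (B x) + D (C x) \<and>
      C (A x) = A (C x) \<and> B (D x) = D (B x))"
    by (simp add: unit_circle_trigonometric_eq_iff[OF vs.vector_space_axioms])
  finally show ?thesis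
    by (auto simp: B_def D_def fun_eq_iff)
qed

end

theorem lemma4p7:
  fixes sc :: "complex \<Rightarrow> 'a::ab_group_add \<Rightarrow> 'a"
    and ip :: "'a \<Rightarrow> 'a \<Rightarrow> complex"
    and A1 A2 :: "'a \<Rightarrow> 'a"
  assumes "hilbert_space sc ip"
    and "bounded_op sc ip A1" and "bounded_op sc ip A2"
  shows "(almost_normal ip A1 A2 \<longleftrightarrow>
            (\<forall>z. cmod z = 1 \<longrightarrow>
               (\<lambda>x. adj ip A1 x + sc z (A2 x)) \<circ> (\<lambda>x. adj ip A2 x + sc z (A1 x))
             = (\<lambda>x. adj ip A2 x + sc z (A1 x)) \<circ> (\<lambda>x. adj ip A1 x + sc z (A2 x))))
       \<and> (almost_normal ip A1 A2 \<longleftrightarrow>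
            (\<forall>z. cmod z = 1 \<longrightarrow> normal_op ip (\<lambda>x. adj ip A2 x + sc z (A1 x))))
       \<and> (almost_normal ip A1 A2 \<longleftrightarrow>
            (\<forall>z. cmod z = 1 \<longrightarrow> normal_op ip (\<lambda>x. adj ip A1 x + sc z (A2 x))))"
proof -
  interpret complex_hilbert_space sc ip
    using assms(1) by (rule complex_hilbert_space.intro)
  show ?thesis
    unfolding almost_normal_iff[OF assms(2,3)] commuting_pencils_iff[OF assms(2,3)]
      normal_pencil_iff[OF assms(3,2)] normal_pencil_iff[OF assms(2,3)]
    by (auto simp: add.commute)
qed

end
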